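(* Let $\psi^{(A)}$ and $\psi^{(B)}$ be neighbor functions and let $\sigma^{(A)},\sigma^{(B)}$ be positive numbers. Then $\psi^{(A)}$ and $\psi^{(B)}$ are continuously differentiable almost everywhere. Set $\sigma^*=1$ and define $\psi^*$ by $$\frac{d\psi^*(x)}{dx}=\min\left(\frac{1}{\sigma^{(A)}}\frac{d\psi^{(A)}(x)}{dx},\ \frac{1}{\sigma^{(B)}}\frac{d\psi^{(B)}(x)}{dx}\right),\qquad \psi^*(x)=\int_0^x\frac{d\psi^*(s)}{ds}\,ds.$$ Then $\psi^*$ is a neighbor function, and for every $x\geq 0$ we have $I_{\psi^{(A)},\sigma^{(A)}}(x)\subseteq I_{\psi^*,\sigma^*}(x)$ and $I_{\psi^{(B)},\sigma^{(B)}}(x)\subseteq I_{\psi^*,\sigma^*}(x)$.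
   Context: A neighbor function is a function $\psi:\mathbb{R}_{\geq 0}\to\mathbb{R}$ that is (i) strictly increasing, (ii) continuous, (iii) concave, and (iv) such that $g(x)=\psi(e^{x})$ is convex as a function of $x\in\mathbb{R}$. For a neighbor function $\psi$, a number $\sigma\geq 0$ and $y\geq 0$, the uncertainty interval around $y$ is $I_{\psi,\sigma}(y)=\big[\psi^{-1}(\max(\psi(0),\psi(y)-\sigma)),\ \psi^{-1}(\psi(y)+\sigma)\big]$. *)

theory Defs
  imports "HOL-Analysis.Analysis"
begin

definition neighbor_fn :: "(real \<Rightarrow> real) \<Rightarrow> bool" where
  "neighbor_fn \<psi> \<longleftrightarrow>
     strict_mono_on {0..} \<psi> \<and>
     continuous_on {0..} \<psi> \<and>
     concave_on {0..} \<psi> \<and>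
     convex_on UNIV (\<lambda>x. \<psi> (exp x))"

definition unc_interval :: "(real \<Rightarrow> real) \<Rightarrow> real \<Rightarrow> real \<Rightarrow> real set" where
  "unc_interval \<psi> \<sigma> y =
     {the_inv_into {0..} \<psi> (max (\<psi> 0) (\<psi> y - \<sigma>)) .. the_inv_into {0..} \<psi> (\<psi> y + \<sigma>)}"

definition c1_ae_on :: "real set \<Rightarrow> (real \<Rightarrow> real) \<Rightarrow> bool" where
  "c1_ae_on S f \<longleftrightarrow>
     (\<exists>N. N \<in> null_sets lborel \<and>
          (\<forall>x\<in>S - N. f differentiable (at x)) \<and>
          continuous_on (S - N) (deriv f))"

end

theory Submission
  imports Defs
begin

(*
  A concave, strictly increasing f on [0,oo) has at every t > 0 a left derivative f'-(t), the
  infimum of the slopes from the left, and a right derivative f'+(t) <= f'-(t).  The open gaps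
  (f'+(t), f'-(t)) are pairwise disjoint, so f'+ = f'- outside a countable set of kinks; there f
  is differentiable and f'- is continuous.  Since f'- is antitone, upper Riemann sums give
  int_a^b f'- <= f b - f a, and log-convexity of f o exp makes t * f'-(t) nondecreasing (it is
  the left derivative of f o exp at ln t).

  Hence g = min (f'-_A / sigma_A) (f'-_B / sigma_B) is positive and antitone with t * g(t)
  nondecreasing, which is exactly what makes its primitive psi* strictly increasing, concave and
  log-convex.  As g agrees with the integrand of the theorem off the kinks, psi* is the function of
  the theorem.  Finally psi*(b) - psi*(a) <= (psi(b) - psi(a)) / sigma for both psi, so the
  endpoints of the sigma-interval of psi around x lie inside the 1-interval of psi* around x.
*)

section \<open>Slopes and convexity\<close>

definition slope :: "(real \<Rightarrow> real) \<Rightarrow> real \<Rightarrow> real \<Rightarrow> real" where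
  "slope f a b = (f b - f a) / (b - a)"

lemma slope_commute: "slope f a b = slope f b a"
  unfolding slope_def by (metis minus_diff_eq minus_divide_divide)

lemma slope_alt: "slope f a b = (f a - f b) / (a - b)"
  by (metis slope_commute slope_def)

lemma slope_uminus: "slope (\<lambda>x. - f x) a b = - slope f a b"
  unfolding slope_def by (simp add: diff_divide_distrib)

lemma convex_on_slope_mono:
  assumes f: "convex_on C f" and C: "a \<in> C" "b' \<in> C"
    and "a < b" "a' < b'" "a \<le> a'" "b \<le> b'"
  shows "slope f a b \<le> slope f a' b'"
proof -
  have "slope f a b \<le> slope f a b'"
    using convex_on_slope_le(1)[OF f C, of b] assms
    by (cases "b = b'") (auto simp: slope_alt)
  also have "\<dots> \<le> slope f a' b'"
    using convex_on_slope_le(2)[OF f C, of a'] assms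
    by (cases "a = a'") (auto simp: slope_alt)
  finally show ?thesis .
qed

lemma concave_on_slope_antimono:
  assumes "concave_on C f" "a \<in> C" "b' \<in> C"
    and "a < b" "a' < b'" "a \<le> a'" "b \<le> b'"
  shows "slope f a' b' \<le> slope f a b"
  using convex_on_slope_mono[of C "\<lambda>x. - f x"] assms by (simp add: concave_on_def slope_uminus)

lemma convex_on_pivotI:
  fixes f c :: "real \<Rightarrow> real"
  assumes "convex I"
    and left: "\<And>x m y. x \<in> I \<Longrightarrow> y \<in> I \<Longrightarrow> x < m \<Longrightarrow> m < y \<Longrightarrow>
      f m - f x \<le> c m * (m - x)"
    and right: "\<And>x m y. x \<in> I \<Longrightarrow> y \<in> I \<Longrightarrow> x < m \<Longrightarrow> m < y \<Longrightarrow>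
      c m * (y - m) \<le> f y - f m"
  shows "convex_on I f"
proof (rule convex_on_linorderI)
  fix t x y :: real assume t: "0 < t" "t < 1" and xy: "x \<in> I" "y \<in> I" "x < y"
  define m where "m = (1 - t) * x + t * y"
  have m_dist: "m - x = t * (y - x)" "y - m = (1 - t) * (y - x)"
    unfolding m_def by (auto simp: algebra_simps)
  have "x < m" using m_dist(1) mult_pos_pos[of t "y - x"] t xy by linarith
  moreover have "m < y" using m_dist(2) mult_pos_pos[of "1 - t" "y - x"] t xy by linarith
  ultimately have "f m - f x \<le> c m * (t * (y - x))" "c m * ((1 - t) * (y - x)) \<le> f y - f m"
    using left[OF xy(1,2)] right[OF xy(1,2)] by (simp_all flip: m_dist)
  then have "(1 - t) * (f m - f x) \<le> (1 - t) * (c m * (t * (y - x)))"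
    and "t * (c m * ((1 - t) * (y - x))) \<le> t * (f y - f m)"
    using t by (simp_all add: mult_left_mono)
  then have "f m \<le> (1 - t) * f x + t * f y"
    by (simp add: algebra_simps)
  then show "f ((1 - t) *\<^sub>R x + t *\<^sub>R y) \<le> (1 - t) * f x + t * f y"
    by (simp add: m_def)
qed (rule \<open>convex I\<close>)

lemma slope_exp_ln_bounds:
  fixes f :: "real \<Rightarrow> real"
  assumes st: "0 < s" "s < t" and mono: "f s \<le> f t"
  shows "s * slope f s t \<le> slope (\<lambda>x. f (exp x)) (ln s) (ln t)"
    and "slope (\<lambda>x. f (exp x)) (ln s) (ln t) \<le> t * slope f s t"
proof -
  have L: "0 < ln t - ln s" using st by simp
  have "ln (t / s) \<le> t / s - 1" "ln (s / t) \<le> s / t - 1"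
    using st by (simp_all add: ln_le_minus_one)
  then have "s * (ln t - ln s) \<le> t - s" "t - s \<le> t * (ln t - ln s)"
    using st by (simp_all add: ln_div field_simps)
  then have "s * (ln t - ln s) * (f t - f s) \<le> (t - s) * (f t - f s)"
    "(t - s) * (f t - f s) \<le> t * (ln t - ln s) * (f t - f s)"
    using mono by (simp_all add: mult_right_mono)
  then show "s * slope f s t \<le> slope (\<lambda>x. f (exp x)) (ln s) (ln t)"
    and "slope (\<lambda>x. f (exp x)) (ln s) (ln t) \<le> t * slope f s t"
    using st L by (simp_all add: slope_def field_simps)
qed

lemma integrable_on_Icc_bounded_tails:
  fixes h :: "real \<Rightarrow> real"
  assumes "a < b"
    and nonneg: "\<And>x. a < x \<Longrightarrow> x \<le> b \<Longrightarrow> 0 \<le> h x"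
    and int: "\<And>c. a < c \<Longrightarrow> c \<le> b \<Longrightarrow> h integrable_on {c..b}"
    and bound: "\<And>c. a < c \<Longrightarrow> c \<le> b \<Longrightarrow> integral {c..b} h \<le> M"
  shows "h integrable_on {a..b}" and "integral {a..b} h \<le> M"
proof -
  define c where "c k = a + (b - a) / real (Suc k)" for k
  have c_step: "(b - a) / real (Suc k') \<le> (b - a) / real (Suc k)" if "k \<le> k'" for k k'
    using \<open>a < b\<close> that by (intro divide_left_mono) auto
  have c: "a < c k" "c k \<le> b" for k
    using c_step[of 0 k] \<open>a < b\<close> by (simp_all add: c_def)
  have c_decr: "c (Suc k) \<le> c k" for k
    using c_step[of k "Suc k"] by (simp add: c_def)
  have "(\<lambda>k. (b - a) / real (Suc k)) \<longlonglongrightarrow> 0"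
    using LIMSEQ_Suc[OF lim_const_over_n[of "b - a"]] by simp
  then have "c \<longlonglongrightarrow> a"
    using tendsto_add[OF tendsto_const[of a]] unfolding c_def by fastforce
  define hk where "hk k x = (if x \<in> {c k..} then h x else 0)" for k x
  have Int: "{c k..} \<inter> {a<..b} = {c k..b}" for k
    using c[of k] by auto
  have "h integrable_on {a<..b} \<and> (\<lambda>k. integral {a<..b} (hk k)) \<longlonglongrightarrow> integral {a<..b} h"
  proof (rule monotone_convergence_increasing)
    show "hk k integrable_on {a<..b}" for k
      unfolding hk_def integrable_restrict_Int Int using c by (intro int)
    show "hk k x \<le> hk (Suc k) x" if "x \<in> {a<..b}" for k x
      using c_decr[of k] nonneg[of x] that unfolding hk_def by auto
    show "(\<lambda>k. hk k x) \<longlonglongrightarrow> h x" if "x \<in> {a<..b}" for x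
    proof (rule tendsto_eventually)
      have "\<forall>\<^sub>F k in sequentially. c k < x"
        using order_tendstoD(2)[OF \<open>c \<longlonglongrightarrow> a\<close>] that by simp
      then show "\<forall>\<^sub>F k in sequentially. hk k x = h x"
        by eventually_elim (auto simp: hk_def)
    qed
    have "0 \<le> integral {c k..b} h" "integral {c k..b} h \<le> M" for k
      using c[of k] by (auto intro!: integral_nonneg int nonneg bound)
    then show "bounded (range (\<lambda>k. integral {a<..b} (hk k)))"
      unfolding hk_def integral_restrict_Int Int bounded_iff by (intro exI[of _ M]) auto
  qed
  moreover have "integral {a<..b} (hk k) \<le> M" for k
    unfolding hk_def integral_restrict_Int Int using c[of k] by (rule bound)
  ultimately have Ioc: "h integrable_on {a<..b}" "integral {a<..b} h \<le> M"
    by (auto intro: LIMSEQ_le_const2)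
  have spike: "(h has_integral y) {a<..b} \<longleftrightarrow> (h has_integral y) {a..b}" for y
    by (rule has_integral_spike_set_eq; rule negligible_subset[OF negligible_sing[of a]]) auto
  show "h integrable_on {a..b}"
    using Ioc(1) spike unfolding integrable_on_def by blast
  then show "integral {a..b} h \<le> M"
    using Ioc spike by (metis has_integral_integrable_integral)
qed

lemma has_integral_const_div:
  fixes c p q :: real
  assumes "0 < p" "p \<le> q"
  shows "((\<lambda>s. c / s) has_integral c * (ln q - ln p)) {p..q}"
proof -
  have "((\<lambda>s. c * ln s) has_vector_derivative c / s) (at s within {p..q})" if "s \<in> {p..q}" for s
    using that assms
    by (auto intro!: derivative_eq_intros simp flip: has_real_derivative_iff_has_vector_derivative)
  from fundamental_theorem_of_calculus[OF assms(2) this] show ?thesis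
    by (simp add: algebra_simps)
qed

section \<open>One-sided derivatives of concave increasing functions\<close>

locale concave_increasing =
  fixes f :: "real \<Rightarrow> real"
  assumes concave: "concave_on {0..} f" and strict_mono: "strict_mono_on {0..} f"
begin

definition left_deriv :: "real \<Rightarrow> real" where
  "left_deriv t = Inf ((\<lambda>s. slope f s t) ` {0..<t})"

definition right_deriv :: "real \<Rightarrow> real" where
  "right_deriv t = Sup ((\<lambda>u. slope f t u) ` {t<..})"

definition kinks :: "real set" where
  "kinks = {t. 0 < t \<and> right_deriv t \<noteq> left_deriv t}"

lemma continuous_on_Ioi: "continuous_on {0<..} f"
proof -
  have "convex_on {0<..} (\<lambda>x. - f x)"
    using concave convex_on_subset[of "{0..}" "\<lambda>x. - f x" "{0<..}"]
    by (simp add: concave_on_def subset_iff)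
  then have "continuous_on {0<..} (\<lambda>x. - (- f x))"
    by (intro continuous_on_minus convex_on_continuous) (simp_all only: open_greaterThan)
  then show ?thesis by simp
qed

lemma isCont_at_pos: "0 < x \<Longrightarrow> isCont f x"
  using continuous_on_interior[OF continuous_on_Ioi] by (simp add: interior_open)

lemma slope_pos: "0 \<le> a \<Longrightarrow> a < b \<Longrightarrow> 0 < slope f a b"
  using strict_mono_onD[OF strict_mono, of a b] by (simp add: slope_def)

lemma slope_antimono:
  "0 \<le> a \<Longrightarrow> a < b \<Longrightarrow> a' < b' \<Longrightarrow> a \<le> a' \<Longrightarrow> b \<le> b' \<Longrightarrow> slope f a' b' \<le> slope f a b"
  by (rule concave_on_slope_antimono[OF concave]) auto

lemma left_deriv_le_slope:
  assumes "0 \<le> s" "s < t"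
  shows "left_deriv t \<le> slope f s t"
proof -
  have "bdd_below ((\<lambda>s. slope f s t) ` {0..<t})"
    using slope_antimono[of _ t t "t + 1"] by (intro bdd_belowI[of _ "slope f t (t + 1)"]) auto
  then show ?thesis
    unfolding left_deriv_def using assms by (intro cInf_lower[OF imageI[of s]]) auto
qed

lemma left_deriv_greatest:
  "0 < t \<Longrightarrow> (\<And>s. 0 \<le> s \<Longrightarrow> s < t \<Longrightarrow> c \<le> slope f s t) \<Longrightarrow> c \<le> left_deriv t"
  unfolding left_deriv_def by (auto intro!: cInf_greatest)

lemma slope_le_right_deriv:
  assumes "0 < t" "t < u"
  shows "slope f t u \<le> right_deriv t"
proof -
  have "bdd_above ((\<lambda>u. slope f t u) ` {t<..})"
    using slope_antimono[of 0 t t] assms by (intro bdd_aboveI[of _ "slope f 0 t"]) auto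
  then show ?thesis
    unfolding right_deriv_def using assms by (intro cSup_upper[OF imageI[of u]]) auto
qed

lemma right_deriv_least: "(\<And>u. t < u \<Longrightarrow> slope f t u \<le> c) \<Longrightarrow> right_deriv t \<le> c"
  unfolding right_deriv_def by (auto intro!: cSup_least)

lemma right_deriv_le_left_deriv: "0 < t \<Longrightarrow> right_deriv t \<le> left_deriv t"
  using slope_antimono[of _ t t] by (intro left_deriv_greatest right_deriv_least) auto

lemma left_deriv_le_right_deriv:
  assumes "0 < t" "t < t'"
  shows "left_deriv t' \<le> right_deriv t"
  using left_deriv_le_slope[of t t'] slope_le_right_deriv[of t t'] assms by simp

lemma left_deriv_pos: "0 < t \<Longrightarrow> 0 < left_deriv t"
  using slope_pos[of t "t + 1"] slope_le_right_deriv[of t "t + 1"] right_deriv_le_left_deriv[of t]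
  by simp

lemma left_deriv_antimono: "0 < t \<Longrightarrow> t \<le> t' \<Longrightarrow> left_deriv t' \<le> left_deriv t"
  using left_deriv_le_right_deriv[of t t'] right_deriv_le_left_deriv[of t]
  by (cases "t = t'") auto

lemma left_deriv_integrable: "0 < a \<Longrightarrow> left_deriv integrable_on {a..b}"
  using integrable_on_mono_on[of a b "\<lambda>x. - left_deriv x"] left_deriv_antimono
  by (auto simp: mono_on_def dest: integrable_neg)

lemma slope_near_left_deriv:
  assumes "0 < t" "left_deriv t < c"
  obtains s where "0 \<le> s" "s < t" "slope f s t < c"
  using cInf_lessD[of "(\<lambda>s. slope f s t) ` {0..<t}" c] assms unfolding left_deriv_def by auto

lemma slope_near_right_deriv:
  assumes "c < right_deriv t"
  obtains u where "t < u" "c < slope f t u"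
  using less_cSupD[of "(\<lambda>u. slope f t u) ` {t<..}" c] assms unfolding right_deriv_def by auto

lemma isCont_slope_right_endpoint: "0 < x \<Longrightarrow> x \<noteq> s \<Longrightarrow> isCont (\<lambda>y. slope f s y) x"
  and isCont_slope_left_endpoint: "0 < x \<Longrightarrow> x \<noteq> u \<Longrightarrow> isCont (\<lambda>y. slope f y u) x"
  unfolding slope_def by (intro continuous_intros isCont_at_pos; simp)+

lemma countable_kinks: "countable kinks"
proof -
  define gap where "gap t = {right_deriv t<..<left_deriv t}" for t
  have gap_nonempty: "gap t \<noteq> {}" if "t \<in> kinks" for t
    using that right_deriv_le_left_deriv[of t] unfolding kinks_def gap_def by auto
  have gaps_disjoint: "gap t \<inter> gap t' = {}" if "0 < t" "t < t'" for t t'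
    using left_deriv_le_right_deriv[OF that] unfolding gap_def by auto
  have "inj_on gap kinks"
  proof (rule inj_onI)
    fix t t' assume "t \<in> kinks" "t' \<in> kinks" "gap t = gap t'"
    then show "t = t'"
      using gaps_disjoint[of t t'] gaps_disjoint[of t' t] gap_nonempty[of t]
      by (cases t t' rule: linorder_cases) (auto simp: kinks_def)
  qed
  moreover have "countable (gap ` kinks)"
  proof (rule countable_disjoint_open_subsets)
    show "pairwise disjnt (gap ` kinks)"
    proof (rule pairwise_imageI)
      fix t t' assume "t \<in> kinks" "t' \<in> kinks" "t \<noteq> t'"
      then show "disjnt (gap t) (gap t')"
        using gaps_disjoint[of t t'] gaps_disjoint[of t' t] unfolding disjnt_def
        by (cases t t' rule: linorder_cases) (auto simp: kinks_def)
    qed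
  qed (auto simp: gap_def)
  ultimately show ?thesis by (rule countable_image_inj_on[rotated])
qed

lemma has_real_derivative_left_deriv:
  assumes t: "0 < t" "t \<notin> kinks"
  shows "(f has_real_derivative left_deriv t) (at t)"
  unfolding has_field_derivative_iff
proof (rule LIM_I)
  fix r :: real assume "0 < r"
  then have "left_deriv t < left_deriv t + r" "left_deriv t - r < right_deriv t"
    using t by (simp_all add: kinks_def)
  then obtain s u where s: "0 \<le> s" "s < t" "slope f s t < left_deriv t + r"
    and u: "t < u" "left_deriv t - r < slope f t u"
    using slope_near_left_deriv[OF t(1)] slope_near_right_deriv by metis
  show "\<exists>d>0. \<forall>y. y \<noteq> t \<and> norm (y - t) < d \<longrightarrow> norm ((f y - f t) / (y - t) - left_deriv t) < r"
  proof (intro exI[of _ "min (t - s) (u - t)"] conjI allI impI)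
    fix y assume y: "y \<noteq> t \<and> norm (y - t) < min (t - s) (u - t)"
    have "(f y - f t) / (y - t) = slope f t y" by (simp add: slope_def)
    moreover have "left_deriv t \<le> slope f t y \<and> slope f t y < left_deriv t + r" if "y < t"
      using that y s left_deriv_le_slope[of y t] slope_antimono[of s t y t]
      by (simp add: slope_commute[of f t y])
    moreover have "left_deriv t - r < slope f t y \<and> slope f t y \<le> left_deriv t" if "t < y"
      using that y u t slope_le_right_deriv[of t y] slope_antimono[of t y t u]
      by (simp add: kinks_def)
    ultimately show "norm ((f y - f t) / (y - t) - left_deriv t) < r"
      using y by (cases "y < t") auto
  qed (use s u in auto)
qed

lemma isCont_left_deriv:
  assumes x: "0 < x" "x \<notin> kinks"
  shows "isCont left_deriv x"
  unfolding isCont_def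
proof (rule order_tendstoI)
  fix b assume "left_deriv x < b"
  then obtain s where s: "0 \<le> s" "s < x" "slope f s x < b"
    using slope_near_left_deriv[OF x(1)] by blast
  have "\<forall>\<^sub>F y in at x. slope f s y < b"
    using isCont_slope_right_endpoint[of x s] s x unfolding isCont_def by (auto intro: order_tendstoD)
  moreover have "\<forall>\<^sub>F y in at x. s < y"
    using s by (intro order_tendstoD tendsto_ident_at) auto
  ultimately show "\<forall>\<^sub>F y in at x. left_deriv y < b"
    by eventually_elim (use left_deriv_le_slope s in fastforce)
next
  fix a assume "a < left_deriv x"
  then have "a < right_deriv x" using x by (simp add: kinks_def)
  then obtain u where u: "x < u" "a < slope f x u"
    using slope_near_right_deriv by blast
  have "\<forall>\<^sub>F y in at x. a < slope f y u"
    using isCont_slope_left_endpoint[of x u] u x unfolding isCont_def by (auto intro: order_tendstoD)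
  moreover have "\<forall>\<^sub>F y in at x. 0 < y" "\<forall>\<^sub>F y in at x. y < u"
    using x u by (auto intro: order_tendstoD tendsto_ident_at)
  ultimately show "\<forall>\<^sub>F y in at x. a < left_deriv y"
  proof eventually_elim
    case (elim y)
    then show ?case
      using slope_le_right_deriv[of y u] right_deriv_le_left_deriv[of y] by linarith
  qed
qed

lemma c1_ae_on_nonneg: "c1_ae_on {0..} f"
  unfolding c1_ae_on_def
proof (intro exI[of _ "insert 0 kinks"] conjI ballI)
  show "insert 0 kinks \<in> null_sets lborel"
    using countable_kinks by (intro countable_imp_null_set_lborel) simp
  have x: "0 < x" "x \<notin> kinks" if "x \<in> {0..} - insert 0 kinks" for x
    using that by auto
  show "f differentiable (at x)" if "x \<in> {0..} - insert 0 kinks" for x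
    unfolding real_differentiable_def using has_real_derivative_left_deriv[OF x[OF that]] by (rule exI)
  have "continuous_on ({0..} - insert 0 kinks) left_deriv"
    by (rule continuous_at_imp_continuous_on) (use isCont_left_deriv x in blast)
  moreover have "left_deriv x = deriv f x" if "x \<in> {0..} - insert 0 kinks" for x
    using DERIV_imp_deriv[OF has_real_derivative_left_deriv[OF x[OF that]]] by simp
  ultimately show "continuous_on ({0..} - insert 0 kinks) (deriv f)"
    using continuous_on_cong by blast
qed

(* Upper Riemann sum of the antitone left_deriv on the grid a, a + d, ...: on each cell it is
   bounded by the slope over the preceding cell, hence the shift by d. *)
lemma integral_left_deriv_shifted_le:
  assumes d: "0 < d" "d \<le> a"
  shows "integral {a..a + real k * d} left_deriv \<le> f (a + real k * d - d) - f (a - d)"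
proof (induction k)
  case (Suc k)
  define p where "p = a + real k * d"
  have "0 \<le> real k * d"
    using d by simp
  then have p: "d \<le> p" "0 < p"
    using d unfolding p_def by linarith+
  have "integral {a..p + d} left_deriv = integral {a..p} left_deriv + integral {p..p + d} left_deriv"
    using p d by (intro Henstock_Kurzweil_Integration.integral_combine[symmetric] left_deriv_integrable)
      (auto simp: p_def)
  moreover have "integral {p..p + d} left_deriv \<le> integral {p..p + d} (\<lambda>_. left_deriv p)"
    using p by (intro integral_le left_deriv_integrable left_deriv_antimono) auto
  moreover have "integral {p..p + d} (\<lambda>_. left_deriv p) \<le> d * slope f (p - d) p"
    using d p left_deriv_le_slope[of "p - d" p] by simp
  moreover have "d * slope f (p - d) p = f p - f (p - d)"
    using d by (simp add: slope_def)
  ultimately show ?case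
    using Suc.IH by (simp add: p_def algebra_simps)
qed simp

lemma integral_left_deriv_le:
  assumes "0 < a" "a \<le> b"
  shows "integral {a..b} left_deriv \<le> f b - f a"
proof (cases "a = b")
  case False
  define d where "d n = (b - a) / real n" for n :: nat
  have bound: "integral {a..b} left_deriv \<le> f b - f (a - d n)" if n: "0 < n" "d n \<le> a" for n
  proof -
    have "0 < d n" "a + real n * d n = b"
      using n False assms by (simp_all add: d_def)
    moreover have "f (b - d n) \<le> f b"
      using n \<open>0 < d n\<close> assms by (intro strict_mono_on_leD[OF strict_mono]) auto
    ultimately show ?thesis
      using integral_left_deriv_shifted_le[of "d n" a n] n by simp
  qed
  have "d \<longlonglongrightarrow> 0"
    unfolding d_def by (rule lim_const_over_n)
  then have "(\<lambda>n. a - d n) \<longlonglongrightarrow> a"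
    using tendsto_diff[OF tendsto_const[of a] \<open>d \<longlonglongrightarrow> 0\<close>] by simp
  then have "(\<lambda>n. f b - f (a - d n)) \<longlonglongrightarrow> f b - f a"
    by (intro tendsto_diff tendsto_const isCont_tendsto_compose[OF isCont_at_pos[OF assms(1)]])
  moreover have "\<forall>\<^sub>F n in sequentially. integral {a..b} left_deriv \<le> f b - f (a - d n)"
    using eventually_gt_at_top[of 0] order_tendstoD(2)[OF \<open>d \<longlonglongrightarrow> 0\<close> assms(1)]
    by eventually_elim (use bound in auto)
  ultimately show ?thesis
    by (rule tendsto_lowerbound) simp
qed simp

lemma mult_left_deriv_mono:
  assumes log_convex: "convex_on UNIV (\<lambda>x. f (exp x))" and "0 < t" "t \<le> t'"
  shows "t * left_deriv t \<le> t' * left_deriv t'"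
proof (cases "t = t'")
  case False
  with assms have t: "0 < t" "t < t'" by simp_all
  have mono: "f p \<le> f q" if "0 \<le> p" "p \<le> q" for p q
    using that by (intro strict_mono_on_leD[OF strict_mono]) auto
  have slopes: "p * slope f p q \<le> q' * slope f p' q'"
    if "0 < p" "p < q" "q \<le> p'" "p' < q'" for p q p' q'
  proof -
    have "p * slope f p q \<le> slope (\<lambda>x. f (exp x)) (ln p) (ln q)"
      using that mono by (intro slope_exp_ln_bounds) auto
    also have "\<dots> \<le> slope (\<lambda>x. f (exp x)) (ln p') (ln q')"
      using that by (intro convex_on_slope_mono[OF log_convex]) auto
    also have "\<dots> \<le> q' * slope f p' q'"
      using that mono by (intro slope_exp_ln_bounds) auto
    finally show ?thesis .
  qed
  have beyond_t: "t * left_deriv t \<le> t' * slope f s' t'" if s': "t \<le> s'" "s' < t'" for s'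
  proof (rule field_le_mult_one_interval)
    fix z :: real assume z: "0 < z" "z < 1"
    have "z * (t * left_deriv t) \<le> z * t * slope f (z * t) t"
      using z t left_deriv_le_slope[of "z * t" t] by (simp add: mult.assoc)
    also have "\<dots> \<le> t' * slope f s' t'"
      using z t s' by (intro slopes) auto
    finally show "z * (t * left_deriv t) \<le> t' * slope f s' t'" .
  qed
  have "t * left_deriv t \<le> t' * slope f s' t'" if s': "0 \<le> s'" "s' < t'" for s'
  proof (cases "t \<le> s'")
    case False
    then have "t * left_deriv t \<le> t' * slope f t t'"
      using t by (intro beyond_t) auto
    also have "\<dots> \<le> t' * slope f s' t'"
      using False s' t by (intro mult_left_mono slope_antimono) auto
    finally show ?thesis .
  qed (use beyond_t s' in auto)
  then have "t * left_deriv t / t' \<le> left_deriv t'"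
    using t by (intro left_deriv_greatest) (auto simp: field_simps)
  then show ?thesis
    using t by (simp add: field_simps)
qed simp

end

section \<open>Primitives that are neighbor functions\<close>

locale neighbor_density =
  fixes g :: "real \<Rightarrow> real"
  assumes integrable: "\<And>b. g integrable_on {0..b}"
    and pos: "\<And>x. 0 < x \<Longrightarrow> 0 < g x"
    and antimono: "\<And>x y. 0 < x \<Longrightarrow> x \<le> y \<Longrightarrow> g y \<le> g x"
    and mult_mono: "\<And>x y. 0 < x \<Longrightarrow> x \<le> y \<Longrightarrow> x * g x \<le> y * g y"
begin

definition primitive :: "real \<Rightarrow> real" where
  "primitive x = integral {0..x} g"

lemma integrable_Icc: "0 \<le> a \<Longrightarrow> g integrable_on {a..b}"
  by (cases "a \<le> b") (auto intro: integrable_on_subinterval[OF integrable[of b]])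

lemma primitive_diff: "0 \<le> a \<Longrightarrow> a \<le> b \<Longrightarrow> primitive b - primitive a = integral {a..b} g"
  unfolding primitive_def
  using Henstock_Kurzweil_Integration.integral_combine[of 0 a b g] integrable[of b] by simp

lemma integral_ge_right_endpoint:
  assumes "0 \<le> x" "x \<le> m" "0 < m"
  shows "g m * (m - x) \<le> integral {x..m} g"
proof -
  have "integral {x<..<m} (\<lambda>_. g m) \<le> integral {x<..<m} g"
    using assms integrable_Icc[of x m]
    by (intro integral_le antimono) (auto simp: integrable_on_open_interval_real)
  then show ?thesis
    using assms by (simp add: mult.commute flip: integral_open_interval_real)
qed

lemma integral_le_left_endpoint:
  assumes "0 < m" "m \<le> y"
  shows "integral {m..y} g \<le> g m * (y - m)"
proof -
  have "integral {m..y} g \<le> integral {m..y} (\<lambda>_. g m)"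
    using assms by (intro integral_le integrable_Icc antimono) auto
  then show ?thesis
    using assms by (simp add: mult.commute)
qed

lemma continuous_on_primitive: "continuous_on {0..} primitive"
proof (rule continuous_on_eq_continuous_within[THEN iffD2], rule ballI)
  fix x :: real assume x: "x \<in> {0..}"
  have "continuous_on {0..x + 1} primitive"
    unfolding primitive_def by (rule indefinite_integral_continuous_1[OF integrable])
  then have "continuous (at x within {0..x + 1}) primitive"
    using x by (simp add: continuous_on_eq_continuous_within)
  moreover have "at x within {0..} = at x within {0..x + 1}"
    by (rule at_within_nhd[of x "{..<x + 1}"]) auto
  ultimately show "continuous (at x within {0..}) primitive"
    by simp
qed

lemma strict_mono_on_primitive: "strict_mono_on {0..} primitive"
proof (rule strict_mono_onI)
  fix a b :: real assume ab: "a \<in> {0..}" "b \<in> {0..}" "a < b"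
  then have "0 < g b * (b - a)"
    using pos[of b] by simp
  also have "\<dots> \<le> primitive b - primitive a"
    using ab integral_ge_right_endpoint[of a b] primitive_diff[of a b] by simp
  finally show "primitive a < primitive b" by simp
qed

lemma concave_on_primitive: "concave_on {0..} primitive"
  unfolding concave_on_def
proof (rule convex_on_pivotI[where c = "\<lambda>m. - g m"])
  fix x m y :: real assume "x \<in> {0..}" "y \<in> {0..}" "x < m" "m < y"
  then show "- primitive m - - primitive x \<le> - g m * (m - x)"
    and "- g m * (y - m) \<le> - primitive y - - primitive m"
    using integral_ge_right_endpoint[of x m] integral_le_left_endpoint[of m y]
      primitive_diff[of x m] primitive_diff[of m y] by auto
qed simp

lemma log_convex_primitive: "convex_on UNIV (\<lambda>x. primitive (exp x))"
  \<comment> \<open>The pivot exp w * g (exp w) is the derivative of primitive o exp at w.\<close>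
proof (rule convex_on_pivotI[where c = "\<lambda>w. exp w * g (exp w)"])
  fix u w v :: real assume uwv: "u < w" "w < v"
  let ?c = "exp w * g (exp w)"
  have "integral {exp u..exp w} g \<le> integral {exp u..exp w} (\<lambda>s. ?c / s)"
  proof (rule integral_le)
    fix s assume s: "s \<in> {exp u..exp w}"
    then have "0 < s"
      by (auto intro: less_le_trans[OF exp_gt_zero])
    then show "g s \<le> ?c / s"
      using s mult_mono[of s "exp w"] by (simp add: pos_le_divide_eq mult.commute)
  qed (use has_integral_const_div[of "exp u" "exp w"] uwv in \<open>auto intro!: integrable_Icc\<close>)
  also have "\<dots> = ?c * (w - u)"
    using has_integral_const_div[of "exp u" "exp w" ?c] uwv by (simp add: integral_unique)
  finally show "primitive (exp w) - primitive (exp u) \<le> ?c * (w - u)"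
    using primitive_diff[of "exp u" "exp w"] uwv by simp
  have "?c * (v - w) = integral {exp w..exp v} (\<lambda>s. ?c / s)"
    using has_integral_const_div[of "exp w" "exp v" ?c] uwv by (simp add: integral_unique)
  also have "\<dots> \<le> integral {exp w..exp v} g"
  proof (rule integral_le)
    fix s assume s: "s \<in> {exp w..exp v}"
    then have "0 < s"
      by (auto intro: less_le_trans[OF exp_gt_zero])
    then show "?c / s \<le> g s"
      using s mult_mono[of "exp w" s] by (simp add: pos_divide_le_eq mult.commute)
  qed (use has_integral_const_div[of "exp w" "exp v"] uwv in \<open>auto intro!: integrable_Icc\<close>)
  finally show "?c * (v - w) \<le> primitive (exp v) - primitive (exp w)"
    using primitive_diff[of "exp w" "exp v"] uwv by simp
qed simp

lemma neighbor_fn_primitive: "neighbor_fn primitive"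
  unfolding neighbor_fn_def
  using strict_mono_on_primitive continuous_on_primitive concave_on_primitive log_convex_primitive
  by blast

end

section \<open>Uncertainty intervals\<close>

lemma neighbor_fn_concave_increasing: "neighbor_fn f \<Longrightarrow> concave_increasing f"
  unfolding neighbor_fn_def concave_increasing_def by blast

lemma neighbor_fn_surj:
  assumes nf: "neighbor_fn f" and y: "f 0 \<le> y"
  obtains x where "0 \<le> x" "f x = y"
proof -
  have sm: "strict_mono_on {0..} f" and ct: "continuous_on {0..} f"
    and log_convex: "convex_on UNIV (\<lambda>x. f (exp x))"
    using nf unfolding neighbor_fn_def by auto
  define c where "c = f 1 - f (exp (- 1))"
  have c: "0 < c"
    unfolding c_def using strict_mono_onD[OF sm, of "exp (- 1)" 1] by simp
  define u where "u = max 1 ((y - f 1) / c)"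
  have "1 \<le> u" "(y - f 1) / c \<le> u"
    unfolding u_def by simp_all
  then have u: "1 \<le> u" "y - f 1 \<le> c * u"
    using c by (simp_all add: pos_divide_le_eq mult.commute)
  have "slope (\<lambda>x. f (exp x)) (- 1) 0 \<le> slope (\<lambda>x. f (exp x)) 0 u"
    using u by (intro convex_on_slope_mono[OF log_convex]) auto
  then have "c * u \<le> f (exp u) - f 1"
    using u by (simp add: slope_def c_def pos_le_divide_eq)
  then have "y \<le> f (exp u)"
    using u by linarith
  moreover have "continuous_on {0..exp u} f"
    using ct by (rule continuous_on_subset) auto
  ultimately obtain x where "0 \<le> x" "x \<le> exp u" "f x = y"
    using IVT'[of f 0 y "exp u"] y by auto
  then show ?thesis using that by blast
qed

lemma the_inv_into_neighbor_fn: "neighbor_fn f \<Longrightarrow> 0 \<le> x \<Longrightarrow> the_inv_into {0..} f (f x) = x"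
  unfolding neighbor_fn_def by (auto intro: the_inv_into_f_f strict_mono_on_imp_inj_on)

lemma unc_interval_endpoints:
  assumes nf: "neighbor_fn f" and "0 \<le> x" "0 \<le> \<sigma>"
  obtains lo hi where "unc_interval f \<sigma> x = {lo..hi}"
    "0 \<le> lo" "f lo = max (f 0) (f x - \<sigma>)" "0 \<le> hi" "f hi = f x + \<sigma>"
proof -
  have "f 0 \<le> f x"
    using nf \<open>0 \<le> x\<close> unfolding neighbor_fn_def by (auto intro: strict_mono_on_leD)
  obtain lo where lo: "0 \<le> lo" "f lo = max (f 0) (f x - \<sigma>)"
    using neighbor_fn_surj[OF nf, of "max (f 0) (f x - \<sigma>)"] by auto
  obtain hi where hi: "0 \<le> hi" "f hi = f x + \<sigma>"
    using neighbor_fn_surj[OF nf, of "f x + \<sigma>"] \<open>f 0 \<le> f x\<close> \<open>0 \<le> \<sigma>\<close> by auto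
  have "unc_interval f \<sigma> x = {lo..hi}"
    unfolding unc_interval_def lo(2)[symmetric] hi(2)[symmetric]
    using the_inv_into_neighbor_fn[OF nf] lo(1) hi(1) by simp
  with lo hi show ?thesis using that by blast
qed

lemma unc_interval_subset:
  assumes nf: "neighbor_fn f" and nF: "neighbor_fn F" and "0 < \<sigma>" "0 \<le> x"
    and le: "\<And>a b. 0 \<le> a \<Longrightarrow> a \<le> b \<Longrightarrow> F b - F a \<le> (f b - f a) / \<sigma>"
  shows "unc_interval f \<sigma> x \<subseteq> unc_interval F 1 x"
proof -
  have f_le_iff: "f a \<le> f b \<longleftrightarrow> a \<le> b" and F_le_iff: "F a \<le> F b \<longleftrightarrow> a \<le> b"
    if "0 \<le> a" "0 \<le> b" for a b
    using nf nF strict_mono_on_less_eq[of "{0..}" f a b] strict_mono_on_less_eq[of "{0..}" F a b] that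
    unfolding neighbor_fn_def by simp_all
  obtain lo hi where I: "unc_interval f \<sigma> x = {lo..hi}"
    and lo: "0 \<le> lo" "f lo = max (f 0) (f x - \<sigma>)" and hi: "0 \<le> hi" "f hi = f x + \<sigma>"
    using unc_interval_endpoints[OF nf \<open>0 \<le> x\<close>] \<open>0 < \<sigma>\<close> by (metis less_imp_le)
  obtain lo' hi' where I': "unc_interval F 1 x = {lo'..hi'}"
    and lo': "0 \<le> lo'" "F lo' = max (F 0) (F x - 1)" and hi': "0 \<le> hi'" "F hi' = F x + 1"
    using unc_interval_endpoints[OF nF \<open>0 \<le> x\<close>] by (metis zero_le_one)
  have "f 0 \<le> f x"
    using f_le_iff[of 0 x] \<open>0 \<le> x\<close> by simp
  then have "lo \<le> x"
    using f_le_iff[OF lo(1) \<open>0 \<le> x\<close>] lo(2) \<open>0 < \<sigma>\<close> by simp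
  moreover have "(f x - f lo) / \<sigma> \<le> 1"
    using lo(2) \<open>0 < \<sigma>\<close> by (simp add: pos_divide_le_eq)
  ultimately have "F x - F lo \<le> 1"
    using le[OF lo(1)] by fastforce
  moreover have "F 0 \<le> F lo"
    using F_le_iff[of 0 lo] lo(1) by simp
  ultimately have "lo' \<le> lo"
    using F_le_iff[OF lo'(1) lo(1)] lo'(2) by simp
  have "x \<le> hi"
    using f_le_iff[OF \<open>0 \<le> x\<close> hi(1)] hi(2) \<open>0 < \<sigma>\<close> by simp
  moreover have "(f hi - f x) / \<sigma> = 1"
    using hi(2) \<open>0 < \<sigma>\<close> by simp
  ultimately have "F hi - F x \<le> 1"
    using le[OF \<open>0 \<le> x\<close>] by fastforce
  then have "hi \<le> hi'"
    using F_le_iff[OF hi(1) hi'(1)] hi'(2) by simp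
  show ?thesis
    unfolding I I' using \<open>lo' \<le> lo\<close> \<open>hi \<le> hi'\<close> by auto
qed

section \<open>Combining two neighbor functions\<close>

locale neighbor_pair =
  fixes fA fB :: "real \<Rightarrow> real" and \<sigma>A \<sigma>B :: real
  assumes neighbor_A: "neighbor_fn fA" and neighbor_B: "neighbor_fn fB"
    and \<sigma>A: "0 < \<sigma>A" and \<sigma>B: "0 < \<sigma>B"
begin

sublocale A: concave_increasing fA
  using neighbor_A by (rule neighbor_fn_concave_increasing)

sublocale B: concave_increasing fB
  using neighbor_B by (rule neighbor_fn_concave_increasing)

(* The integrand of the theorem with deriv replaced by left_deriv: the two agree off the countable
   kinks, but left_deriv is antitone everywhere on (0,oo). *)
definition combined_deriv :: "real \<Rightarrow> real" where
  "combined_deriv x = min (A.left_deriv x / \<sigma>A) (B.left_deriv x / \<sigma>B)"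

lemma combined_deriv_pos: "0 < x \<Longrightarrow> 0 < combined_deriv x"
  unfolding combined_deriv_def using A.left_deriv_pos B.left_deriv_pos \<sigma>A \<sigma>B by simp

lemma combined_deriv_antimono:
  assumes "0 < x" "x \<le> y"
  shows "combined_deriv y \<le> combined_deriv x"
proof -
  have "A.left_deriv y / \<sigma>A \<le> A.left_deriv x / \<sigma>A" "B.left_deriv y / \<sigma>B \<le> B.left_deriv x / \<sigma>B"
    using A.left_deriv_antimono[OF assms] B.left_deriv_antimono[OF assms] \<sigma>A \<sigma>B
    by (simp_all add: divide_right_mono)
  then show ?thesis
    unfolding combined_deriv_def by (rule min.mono)
qed

lemma mult_combined_deriv_mono:
  assumes "0 < x" "x \<le> y"
  shows "x * combined_deriv x \<le> y * combined_deriv y"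
proof -
  have "x * A.left_deriv x / \<sigma>A \<le> y * A.left_deriv y / \<sigma>A"
    "x * B.left_deriv x / \<sigma>B \<le> y * B.left_deriv y / \<sigma>B"
    using A.mult_left_deriv_mono[OF _ assms] B.mult_left_deriv_mono[OF _ assms]
      neighbor_A neighbor_B \<sigma>A \<sigma>B
    unfolding neighbor_fn_def by (simp_all add: divide_right_mono)
  moreover have "x * combined_deriv x = min (x * A.left_deriv x / \<sigma>A) (x * B.left_deriv x / \<sigma>B)"
    "y * combined_deriv y = min (y * A.left_deriv y / \<sigma>A) (y * B.left_deriv y / \<sigma>B)"
    using assms unfolding combined_deriv_def min_mult_distrib_left by simp_all
  ultimately show ?thesis
    by (metis min.mono)
qed

lemma combined_deriv_integrable_pos: "0 < c \<Longrightarrow> combined_deriv integrable_on {c..b}"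
  using integrable_on_mono_on[of c b "\<lambda>x. - combined_deriv x"] combined_deriv_antimono
  by (auto simp: mono_on_def dest: integrable_neg)

lemma integral_combined_deriv_le:
  assumes f: "concave_increasing f" and "0 < \<sigma>"
    and below: "\<And>x. combined_deriv x \<le> concave_increasing.left_deriv f x / \<sigma>"
    and "0 \<le> a" "a \<le> b"
  shows "combined_deriv integrable_on {a..b}" and "integral {a..b} combined_deriv \<le> (f b - f a) / \<sigma>"
proof -
  interpret f: concave_increasing f by (rule f)
  have bound: "integral {c..b} combined_deriv \<le> (f b - f a) / \<sigma>" if c: "a < c" "c \<le> b" for c
  proof -
    have "integral {c..b} combined_deriv \<le> integral {c..b} (\<lambda>x. f.left_deriv x / \<sigma>)"
      using c \<open>0 \<le> a\<close> below
      by (intro integral_le combined_deriv_integrable_pos integrable_on_divide f.left_deriv_integrable) auto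
    also have "\<dots> \<le> (f b - f c) / \<sigma>"
      using f.integral_left_deriv_le[of c b] c \<open>0 \<le> a\<close> \<open>0 < \<sigma>\<close> by (simp add: divide_right_mono)
    also have "\<dots> \<le> (f b - f a) / \<sigma>"
      using strict_mono_on_leD[OF f.strict_mono, of a c] c \<open>0 \<le> a\<close> \<open>0 < \<sigma>\<close>
      by (simp add: divide_right_mono)
    finally show ?thesis .
  qed
  have nonneg: "0 \<le> combined_deriv x" if "a < x" "x \<le> b" for x
    using combined_deriv_pos[of x] that \<open>0 \<le> a\<close> by simp
  have int: "combined_deriv integrable_on {c..b}" if "a < c" "c \<le> b" for c
    using combined_deriv_integrable_pos[of c] that \<open>0 \<le> a\<close> by simp
  have "combined_deriv integrable_on {a..b} \<and> integral {a..b} combined_deriv \<le> (f b - f a) / \<sigma>"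
  proof (cases "a < b")
    case True
    then show ?thesis
      using integrable_on_Icc_bounded_tails[OF True nonneg int bound] by simp
  next
    case False
    then have "b = a" using \<open>a \<le> b\<close> by simp
    then show ?thesis
      using integrable_on_refl[of combined_deriv a] by (simp add: cbox_interval)
  qed
  then show "combined_deriv integrable_on {a..b}" "integral {a..b} combined_deriv \<le> (f b - f a) / \<sigma>"
    by simp_all
qed

sublocale neighbor_density combined_deriv
proof
  show "combined_deriv integrable_on {0..b}" for b
    using integral_combined_deriv_le(1)[OF A.concave_increasing_axioms \<sigma>A, of 0 b]
    by (cases "0 \<le> b") (auto simp: combined_deriv_def)
qed (use combined_deriv_pos combined_deriv_antimono mult_combined_deriv_mono in auto)

lemma primitive_diff_le_A: "0 \<le> a \<Longrightarrow> a \<le> b \<Longrightarrow> primitive b - primitive a \<le> (fA b - fA a) / \<sigma>A"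
  and primitive_diff_le_B: "0 \<le> a \<Longrightarrow> a \<le> b \<Longrightarrow> primitive b - primitive a \<le> (fB b - fB a) / \<sigma>B"
  unfolding primitive_diff
  by (intro integral_combined_deriv_le(2) A.concave_increasing_axioms B.concave_increasing_axioms
      \<sigma>A \<sigma>B; simp add: combined_deriv_def)+

lemma integral_min_deriv_eq_primitive:
  "(\<lambda>x. integral {0..x} (\<lambda>s. min ((1 / \<sigma>A) * deriv fA s) ((1 / \<sigma>B) * deriv fB s))) = primitive"
proof
  fix x
  have "negligible (insert 0 (A.kinks \<union> B.kinks))"
    unfolding negligible_iff_null_sets
    using A.countable_kinks B.countable_kinks
    by (intro null_sets_completionI countable_imp_null_set_lborel) simp
  then show "integral {0..x} (\<lambda>s. min ((1 / \<sigma>A) * deriv fA s) ((1 / \<sigma>B) * deriv fB s)) = primitive x"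
    unfolding primitive_def
  proof (rule integral_spike)
    fix s assume "s \<in> {0..x} - insert 0 (A.kinks \<union> B.kinks)"
    then have "deriv fA s = A.left_deriv s" "deriv fB s = B.left_deriv s"
      by (auto intro!: DERIV_imp_deriv A.has_real_derivative_left_deriv B.has_real_derivative_left_deriv)
    then show "combined_deriv s = min ((1 / \<sigma>A) * deriv fA s) ((1 / \<sigma>B) * deriv fB s)"
      by (simp add: combined_deriv_def)
  qed
qed

end

theorem theorem5p7:
  fixes \<psi>A \<psi>B :: "real \<Rightarrow> real" and \<sigma>A \<sigma>B :: real
  assumes "neighbor_fn \<psi>A" and "neighbor_fn \<psi>B"
    and "\<sigma>A > 0" and "\<sigma>B > 0"
  defines "\<psi>s \<equiv> (\<lambda>x. integral {0..x}
              (\<lambda>s. min ((1 / \<sigma>A) * deriv \<psi>A s) ((1 / \<sigma>B) * deriv \<psi>B s)))"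
  shows "c1_ae_on {0..} \<psi>A \<and> c1_ae_on {0..} \<psi>B \<and>
         neighbor_fn \<psi>s \<and>
         (\<forall>x\<ge>0. unc_interval \<psi>A \<sigma>A x \<subseteq> unc_interval \<psi>s 1 x \<and>
                 unc_interval \<psi>B \<sigma>B x \<subseteq> unc_interval \<psi>s 1 x)"
proof -
  interpret neighbor_pair \<psi>A \<psi>B \<sigma>A \<sigma>B
    using assms(1-4) by unfold_locales
  have \<psi>s: "\<psi>s = primitive"
    unfolding \<psi>s_def by (rule integral_min_deriv_eq_primitive)
  have "unc_interval \<psi>A \<sigma>A x \<subseteq> unc_interval primitive 1 x"
    "unc_interval \<psi>B \<sigma>B x \<subseteq> unc_interval primitive 1 x" if "0 \<le> x" for x
    using unc_interval_subset[OF neighbor_A neighbor_fn_primitive \<sigma>A that primitive_diff_le_A]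
      unc_interval_subset[OF neighbor_B neighbor_fn_primitive \<sigma>B that primitive_diff_le_B]
    by simp_all
  then show ?thesis
    using A.c1_ae_on_nonneg B.c1_ae_on_nonneg neighbor_fn_primitive unfolding \<psi>s by blast
qed

end
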